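(* For any finite set of $\mathrm{B}'$-rules, the calculus $\mathbf{L}^*(/)$ extended with these $\mathrm{B}'$-rules admits cut elimination: every sequent derivable in it (using cut) is derivable without using the cut rule.
   Context: $\mathbf{L}^*(/)$ is the one-division Lambek calculus: formulae are built from variables using only $/$; sequents are $\Pi\to A$ with $\Pi$ a finite (possibly empty) sequence of formulae; axioms $A\to A$; rules ($/L$) from $\Pi\to A$ and $\Delta_1,B,\Delta_2\to C$ infer $\Delta_1,B/A,\Pi,\Delta_2\to C$; ($/R$) from $\Pi,A\to B$ infer $\Pi\to B/A$; (cut) from $\Pi\to A$ and $\Delta_1,A,\Delta_2\to C$ infer $\Delta_1,\Pi,\Delta_2\to C$. For a tuple $(q_1,\dots,q_m,r;p_1,\dots,p_k,t)$ of concrete variables, the corresponding $\mathrm{B}'$-rule is: from $\Pi_1\to p_1$, ..., $\Pi_k\to p_k$ and $\Delta,q_1,\dots,q_m\to r$ infer $\Pi_1,\dots,\Pi_k,\Delta\to t$, for arbitrary sequences of formulae $\Pi_1,\dots,\Pi_k,\Delta$. *)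

theory Defs
  imports Main
begin

text \<open>Formulae of the one-division Lambek calculus over variables of type 'v:
  Var p, and Div B A standing for B / A.\<close>
datatype 'v formula = Var 'v | Div "'v formula" "'v formula"

type_synonym 'v sequent = "'v formula list \<times> 'v formula"

text \<open>A B'-rule given by the tuple (q_1..q_m, r; p_1..p_k, t) of concrete variables,
  represented as (qs, r, ps, t).\<close>
type_synonym 'v brule = "'v list \<times> 'v \<times> 'v list \<times> 'v"

text \<open>Derivability in L*(/) extended with the B'-rules in R.  The flag c says
  whether the cut rule may be used (c = True) or not (c = False).\<close>
inductive derivable :: "'v brule set \<Rightarrow> bool \<Rightarrow> 'v sequent \<Rightarrow> bool"
  for R :: "'v brule set" and c :: bool where
  ax: "derivable R c ([A], A)"
| divL: "derivable R c (Pi, A) \<Longrightarrow> derivable R c (D1 @ [B] @ D2, C) \<Longrightarrow>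
         derivable R c (D1 @ [Div B A] @ Pi @ D2, C)"
| divR: "derivable R c (Pi @ [A], B) \<Longrightarrow> derivable R c (Pi, Div B A)"
| cut: "c \<Longrightarrow> derivable R c (Pi, A) \<Longrightarrow> derivable R c (D1 @ [A] @ D2, C) \<Longrightarrow>
         derivable R c (D1 @ Pi @ D2, C)"
| brule: "(qs, r, ps, t) \<in> R \<Longrightarrow> length Pis = length ps \<Longrightarrow>
          (\<forall>i < length ps. derivable R c (Pis ! i, Var (ps ! i))) \<Longrightarrow>
          derivable R c (D @ map Var qs, Var r) \<Longrightarrow>
          derivable R c (concat Pis @ D, Var t)"

end

theory Submission
  imports Defs
begin

(* Cut is admissible in the cut-free system, by induction on the cut formula and, inside
   that, on the cut-free derivation of the right premise.  The B'-rules behave like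
   structural rules on the antecedents Pi_1, ..., Pi_k, Delta of their conclusion, so a cut
   into one of these permutes into the corresponding premise; and since their conclusion has
   a variable as succedent, a left premise with succedent B / A ends with an axiom, a
   non-principal left rule, or (/R), exactly as in L*(/). *)

definition cut_admissible :: "'v brule set \<Rightarrow> 'v formula \<Rightarrow> bool" where
  "cut_admissible R X \<longleftrightarrow>
     (\<forall>P L M C. derivable R False (P, X) \<longrightarrow> derivable R False (L @ X # M, C) \<longrightarrow>
        derivable R False (L @ P @ M, C))"

lemma cut_admissibleI:
  "(\<And>P L M C. derivable R False (P, X) \<Longrightarrow> derivable R False (L @ X # M, C) \<Longrightarrow>
      derivable R False (L @ P @ M, C)) \<Longrightarrow> cut_admissible R X"
  unfolding cut_admissible_def by blast

lemma cut_admissibleD: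
  "cut_admissible R X \<Longrightarrow> derivable R False (P, X) \<Longrightarrow> derivable R False (L @ X # M, C) \<Longrightarrow>
      derivable R False (L @ P @ M, C)"
  unfolding cut_admissible_def by blast

lemma append_eq_append_ConsE:
  assumes "xs @ ys = L @ X # M"
  obtains E where "xs = L @ X # E" "M = E @ ys"
    | E where "ys = E @ X # M" "L = xs @ E"
  using assms by (auto simp: append_eq_append_conv2 Cons_eq_append_conv append_eq_Cons_conv)

lemma concat_eq_append_ConsE:
  assumes "concat xss = L @ X # M"
  obtains i a b where "i < length xss" "xss ! i = a @ X # b"
    "L = concat (take i xss) @ a" "M = b @ concat (drop (Suc i) xss)"
  using assms
proof (induction xss arbitrary: L thesis)
  case Nil
  then show ?case by simp
next
  case (Cons xs xss)
  from \<open>concat (xs # xss) = L @ X # M\<close> have "xs @ concat xss = L @ X # M" by simp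
  then show ?case
  proof (cases rule: append_eq_append_ConsE)
    case (1 E)
    then show ?thesis using Cons.prems(1)[of 0 L E] by simp
  next
    case (2 E)
    obtain i a b where "i < length xss" "xss ! i = a @ X # b"
      "E = concat (take i xss) @ a" "M = b @ concat (drop (Suc i) xss)"
      using Cons.IH[OF _ \<open>concat xss = E @ X # M\<close>] by blast
    then show ?thesis using Cons.prems(1)[of "Suc i" a b] \<open>L = xs @ E\<close> by simp
  qed
qed

lemma cut_free_cut_principal_Div:
  assumes "cut_admissible R A" "cut_admissible R B"
    and "derivable R False (G, Div B A)"
    and "derivable R False (Pi, A)" "derivable R False (D1 @ B # D2, C)"
  shows "derivable R False (D1 @ G @ Pi @ D2, C)"
  using assms(3-5)
proof (induction "(G, Div B A)" arbitrary: G D1 D2 C rule: derivable.induct)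
  case ax
  then show ?case using derivable.divL[of R False Pi A D1 B D2 C] by simp
next
  case (divL P A' E1 B' E2)
  have "derivable R False ((D1 @ E1) @ [B'] @ (E2 @ Pi @ D2), C)"
    using divL.hyps(4) divL.prems by simp
  from derivable.divL[OF divL.hyps(1) this] show ?case by simp
next
  case (divR P)
  \<comment> \<open>The principal case: the cut on B / A is replaced by cuts on A and on B.\<close>
  have "derivable R False (P @ Pi, B)"
    using cut_admissibleD[OF \<open>cut_admissible R A\<close> divR.prems(1), of P "[]"] divR.hyps(1)
    by simp
  from cut_admissibleD[OF \<open>cut_admissible R B\<close> this divR.prems(2)] show ?case by simp
qed simp_all

lemma cut_free_cut_right_premise:
  assumes "derivable R False (\<Gamma>, C)" "\<Gamma> = L @ X # M"
    and "derivable R False (P, X)"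
    and "\<And>B A. X = Div B A \<Longrightarrow> cut_admissible R A \<and> cut_admissible R B"
  shows "derivable R False (L @ P @ M, C)"
  using assms(1,2)
proof (induction "(\<Gamma>, C)" arbitrary: \<Gamma> C L M rule: derivable.induct)
  case ax
  then show ?case using \<open>derivable R False (P, X)\<close> by (simp add: Cons_eq_append_conv)
next
  case (divL Pi A D1 B D2 C)
  from \<open>D1 @ [Div B A] @ Pi @ D2 = L @ X # M\<close> show ?case
  proof (cases rule: append_eq_append_ConsE)
    case (1 E)
    then have "derivable R False ((L @ P @ E) @ [B] @ D2, C)" using divL.hyps(4) by simp
    from derivable.divL[OF divL.hyps(1) this] show ?thesis using 1 by simp
  next
    case (2 E)
    show ?thesis
    proof (cases E)
      case Nil
      then have "X = Div B A" "L = D1" "M = Pi @ D2" using 2 by auto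
      then show ?thesis
        using cut_free_cut_principal_Div[of R A B P Pi D1 D2 C] assms(3,4) divL.hyps(1,3) by simp
    next
      case (Cons _ E')
      then have "Pi @ D2 = E' @ X # M" "L = D1 @ Div B A # E'" using 2 by auto
      from this(1) show ?thesis
      proof (cases rule: append_eq_append_ConsE)
        case (1 F)
        then have "derivable R False (E' @ P @ F, A)" using divL.hyps(2) by simp
        from derivable.divL[OF this divL.hyps(3)] show ?thesis
          using 1 \<open>L = D1 @ Div B A # E'\<close> by simp
      next
        case (2 F)
        then have "derivable R False ((D1 @ [B] @ F) @ P @ M, C)"
          using divL.hyps(4)[of "D1 @ B # F" M] by simp
        from derivable.divL[OF divL.hyps(1), of D1 B "F @ P @ M" C] this show ?thesis
          using 2 \<open>L = D1 @ Div B A # E'\<close> by simp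
      qed
    qed
  qed
next
  case (divR Pi A B)
  have "derivable R False ((L @ P @ M) @ [A], B)" using divR.hyps(2) divR.prems by simp
  then show ?case using derivable.divR by blast
next
  case (brule qs r ps t Pis D)
  from \<open>concat Pis @ D = L @ X # M\<close> have "concat (Pis @ [D]) = L @ X # M" by simp
  then obtain i a b where i: "i < length (Pis @ [D])" "(Pis @ [D]) ! i = a @ X # b"
    "L = concat (take i (Pis @ [D])) @ a" "M = b @ concat (drop (Suc i) (Pis @ [D]))"
    by (rule concat_eq_append_ConsE)
  show ?case
  proof (cases "i < length Pis")
    case True
    define Pis' where "Pis' = Pis[i := a @ P @ b]"
    have "\<forall>j < length ps. derivable R False (Pis' ! j, Var (ps ! j))"
      using brule.hyps(2,3) True i(2) by (auto simp: Pis'_def nth_list_update nth_append)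
    from derivable.brule[OF brule.hyps(1) _ this brule.hyps(4)]
    have "derivable R False (concat Pis' @ D, Var t)" using brule.hyps(2) by (simp add: Pis'_def)
    then show ?thesis
      using True i(3,4) by (simp add: Pis'_def upd_conv_take_nth_drop)
  next
    case False
    then have "i = length Pis" using i(1) by simp
    then have "D = a @ X # b" "L = concat Pis @ a" "M = b" using i(2-4) by simp_all
    then have "derivable R False (a @ P @ M @ map Var qs, Var r)" using brule.hyps(5) by simp
    moreover have "\<forall>j < length ps. derivable R False (Pis ! j, Var (ps ! j))"
      using brule.hyps(3) by blast
    ultimately show ?thesis
      using derivable.brule[OF brule.hyps(1,2)] \<open>L = concat Pis @ a\<close> by simp
  qed
qed simp

lemma cut_free_cut_admissible: "cut_admissible R X"
proof (induction X)
  case (Var x)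
  show ?case by (intro cut_admissibleI cut_free_cut_right_premise[OF _ refl]) auto
next
  case (Div B A)
  then show ?case by (intro cut_admissibleI cut_free_cut_right_premise[OF _ refl]) auto
qed

theorem lemma4:
  fixes R :: "'v brule set" and s :: "'v sequent"
  assumes "finite R"
    and "derivable R True s"
  shows "derivable R False s"
  using assms(2)
proof (induction rule: derivable.induct)
  case (cut Pi A D1 D2 C)
  then show ?case using cut_admissibleD[OF cut_free_cut_admissible] by simp
qed (auto intro: derivable.intros simp del: append.simps)

end
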